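(* Fix $m\ge1$, $n\ge0$ and $i\in Ag$. Every labelled sequent derivable in $\mathsf{G3Ldm}_{n}^{m}+\mathsf{PR}$ is derivable in $\mathsf{G3Ldm}_{n}^{m}+\mathsf{PR}$ without any use of the rule $(\mathsf{eucl}_i)$.
   Context: Language. $Ag=\{1,\dots,m\}$, $Var$ a countable set of propositional variables; formulas $\phi ::= p \mid \overline{p} \mid (\phi\wedge\phi) \mid (\phi\vee\phi) \mid \Box\phi \mid \Diamond\phi \mid [i]\phi \mid \langle i\rangle\phi$. Labelled sequents $\mathcal{R},\Gamma$: $\mathcal{R}$ a multiset of relational atoms $\mathcal{R}_ixy$, $\Gamma$ a multiset of labelled formulas $x:\phi$. Derivations are finite trees whose leaves are $(\mathsf{id})$ instances. Rules of $\mathsf{G3Ldm}_{n}^{m}$ (premise(s) / conclusion): $(\mathsf{id})$: / $\mathcal{R}, w:p, w:\overline{p},\Gamma$. $(\wedge)$: $\mathcal{R}, w:\phi\wedge\psi, w:\phi,\Gamma$ and $\mathcal{R}, w:\phi\wedge\psi, w:\psi,\Gamma$ / $\mathcal{R}, w:\phi\wedge\psi,\Gamma$. $(\vee)$: $\mathcal{R}, w:\phi\vee\psi, w:\phi, w:\psi,\Gamma$ / $\mathcal{R}, w:\phi\vee\psi,\Gamma$. $([i])$: $\mathcal{R},\mathcal{R}_iwv, v:\phi,\Gamma$ / $\mathcal{R}, w:[i]\phi,\Gamma$ ($v$ fresh). $(\Box)$: $\mathcal{R}, w:\Box\phi, v:\phi,\Gamma$ / $\mathcal{R}, w:\Box\phi,\Gamma$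 ($v$ fresh). $(\Diamond)$: $\mathcal{R}, w:\Diamond\phi, u:\phi,\Gamma$ / $\mathcal{R}, w:\Diamond\phi,\Gamma$. $(\mathsf{IOA})$: $\mathcal{R},\mathcal{R}_1u_1v,\dots,\mathcal{R}_mu_mv,\Gamma$ / $\mathcal{R},\Gamma$ ($v$ fresh). $(\langle i\rangle)$: $\mathcal{R},\mathcal{R}_iwu, w:\langle i\rangle\phi, u:\phi,\Gamma$ / $\mathcal{R},\mathcal{R}_iwu, w:\langle i\rangle\phi,\Gamma$. $(\mathsf{refl}_i)$: $\mathcal{R},\mathcal{R}_iww,\Gamma$ / $\mathcal{R},\Gamma$. $(\mathsf{eucl}_i)$: $\mathcal{R},\mathcal{R}_iwu,\mathcal{R}_iwv,\mathcal{R}_iuv,\Gamma$ / $\mathcal{R},\mathcal{R}_iwu,\mathcal{R}_iwv,\Gamma$. $(\mathsf{APC}^i_n)$ (only if $n>0$): premises $\mathcal{R},\mathcal{R}_iw_kw_j,\Gamma$ for all $0\le k\le n-1$, $k+1\le j\le n$ / $\mathcal{R},\Gamma$. "Fresh" means not occurring in the conclusion. One copy of the indexed rules for each agent. $\mathsf{G3Ldm}_{n}^{m}+\mathsf{PR}$ adds, for each $i\in Ag$, the propagation rule $(\mathsf{Pr}_i)$: $\mathcal{R}, w:\langle i\rangle\phi, u:\phi,\Gamma$ / $\mathcal{R}, w:\langle i\rangle\phi,\Gamma$, applicable only if $w=u$ or there are labels $w=z_0,\dots,z_k=u$ ($k\ge1$) with $\mathcal{R}_iz_lz_{l+1}\in\mathcal{R}$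 or $\mathcal{R}_iz_{l+1}z_l\in\mathcal{R}$ for each $l<k$. *)

theory Defs
  imports Main "HOL-Library.Multiset"
begin

text \<open>Formulas of the language (in negation normal form). Agents, labels and
propositional variables are natural numbers; the agents are Ag = {1..m}.\<close>

datatype fml =
    At nat
  | NAt nat
  | And fml fml
  | Or fml fml
  | Box fml
  | Dia fml
  | Stit nat fml
  | Pos nat fml

type_synonym label = nat

text \<open>Relational atom R_i x y is represented as (i, x, y); labelled formula x:phi as (x, phi).\<close>
type_synonym ratom = "nat \<times> label \<times> label"
type_synonym lfml = "label \<times> fml"

definition rlabels :: "ratom multiset \<Rightarrow> label set" where
  "rlabels R = (\<Union>(i, x, y) \<in> set_mset R. {x, y})"

definition flabels :: "lfml multiset \<Rightarrow> label set" where
  "flabels G = fst ` set_mset G"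

definition labels :: "ratom multiset \<Rightarrow> lfml multiset \<Rightarrow> label set" where
  "labels R G = rlabels R \<union> flabels G"

definition iedge :: "nat \<Rightarrow> ratom multiset \<Rightarrow> label \<Rightarrow> label \<Rightarrow> bool" where
  "iedge i R x y \<longleftrightarrow> (i, x, y) \<in># R \<or> (i, y, x) \<in># R"

text \<open>Derivability in G3Ldm^m_n + PR, where the rule (eucl_i) is available exactly
for the agents i in E.  The full calculus is  deriv m n {1..m}.\<close>

inductive deriv :: "nat \<Rightarrow> nat \<Rightarrow> nat set \<Rightarrow> ratom multiset \<Rightarrow> lfml multiset \<Rightarrow> bool"
  for m :: nat and n :: nat and E :: "nat set" where
  id: "deriv m n E R (add_mset (w, At p) (add_mset (w, NAt p) G))"
| conj: "deriv m n E R (add_mset (w, And a b) (add_mset (w, a) G)) \<Longrightarrow>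
         deriv m n E R (add_mset (w, And a b) (add_mset (w, b) G)) \<Longrightarrow>
         deriv m n E R (add_mset (w, And a b) G)"
| disj: "deriv m n E R (add_mset (w, Or a b) (add_mset (w, a) (add_mset (w, b) G))) \<Longrightarrow>
         deriv m n E R (add_mset (w, Or a b) G)"
| stit: "i \<in> {1..m} \<Longrightarrow> v \<notin> labels R (add_mset (w, Stit i a) G) \<Longrightarrow>
         deriv m n E (add_mset (i, w, v) R) (add_mset (v, a) G) \<Longrightarrow>
         deriv m n E R (add_mset (w, Stit i a) G)"
| box: "v \<notin> labels R (add_mset (w, Box a) G) \<Longrightarrow>
        deriv m n E R (add_mset (w, Box a) (add_mset (v, a) G)) \<Longrightarrow>
        deriv m n E R (add_mset (w, Box a) G)"
| dia: "deriv m n E R (add_mset (w, Dia a) (add_mset (u, a) G)) \<Longrightarrow>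
        deriv m n E R (add_mset (w, Dia a) G)"
| ioa: "v \<notin> labels R G \<Longrightarrow>
        deriv m n E (R + mset (map (\<lambda>j. (j, u j, v)) [1..<Suc m])) G \<Longrightarrow>
        deriv m n E R G"
| pos: "i \<in> {1..m} \<Longrightarrow>
        deriv m n E (add_mset (i, w, u) R) (add_mset (w, Pos i a) (add_mset (u, a) G)) \<Longrightarrow>
        deriv m n E (add_mset (i, w, u) R) (add_mset (w, Pos i a) G)"
| refl: "i \<in> {1..m} \<Longrightarrow> deriv m n E (add_mset (i, w, w) R) G \<Longrightarrow> deriv m n E R G"
| eucl: "i \<in> {1..m} \<Longrightarrow> i \<in> E \<Longrightarrow>
         deriv m n E (add_mset (i, w, u) (add_mset (i, w, v) (add_mset (i, u, v) R))) G \<Longrightarrow>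
         deriv m n E (add_mset (i, w, u) (add_mset (i, w, v) R)) G"
| apc: "i \<in> {1..m} \<Longrightarrow> n > 0 \<Longrightarrow>
        (\<forall>k j. k \<le> n - 1 \<and> k + 1 \<le> j \<and> j \<le> n \<longrightarrow>
                 deriv m n E (add_mset (i, ws k, ws j) R) G) \<Longrightarrow>
        deriv m n E R G"
| pr: "i \<in> {1..m} \<Longrightarrow> (iedge i R)\<^sup>*\<^sup>* w u \<Longrightarrow>
       deriv m n E R (add_mset (w, Pos i a) (add_mset (u, a) G)) \<Longrightarrow>
       deriv m n E R (add_mset (w, Pos i a) G)"

end

theory Submission
  imports Defs
begin

text \<open>An application of (eucl_i) to R_i w u, R_i w v adds R_i u v, whose endpoints are
already i-connected through w. So generalise: if R + S, G is derivable, where every atom of S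
is an i-atom with i-connected endpoints in R, then R, G is derivable without (eucl_i). By rule
induction, (eucl_i) just moves its new atom into S; an instance of (<j>) on an atom of S becomes
an instance of (Pr_j); and atoms of S never change i-connectedness, so the side condition of
(Pr_j) survives.\<close>

definition iconnected_atoms :: "nat \<Rightarrow> ratom multiset \<Rightarrow> ratom multiset \<Rightarrow> bool" where
  "iconnected_atoms i R S \<longleftrightarrow> (\<forall>(j, x, y) \<in># S. j = i \<and> (iedge i R)\<^sup>*\<^sup>* x y)"

lemma symp_iedge: "symp (iedge i R)"
  unfolding iedge_def symp_def by auto

lemma iedge_rtranclp_sym: "(iedge i R)\<^sup>*\<^sup>* x y \<Longrightarrow> (iedge i R)\<^sup>*\<^sup>* y x"
  by (metis symp_iedge symp_rtranclp sympD)

lemma iedge_rtranclp_mono: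
  assumes "R \<subseteq># R'" and "(iedge i R)\<^sup>*\<^sup>* x y"
  shows "(iedge i R')\<^sup>*\<^sup>* x y"
proof -
  have "iedge i R \<le> iedge i R'"
    using assms(1) unfolding iedge_def by (auto dest: mset_subset_eqD)
  then show ?thesis
    using assms(2) by (rule predicate2D[OF rtranclp_mono])
qed

lemma iconnected_atoms_mono:
  "iconnected_atoms i R S \<Longrightarrow> R \<subseteq># R' \<Longrightarrow> iconnected_atoms i R' S"
  unfolding iconnected_atoms_def by (auto intro: iedge_rtranclp_mono)

lemma iedge_rtranclp_of_mem:
  assumes "iconnected_atoms i R S" and "(j, x, y) \<in># R + S"
  shows "(iedge j R)\<^sup>*\<^sup>* x y"
proof (cases "(j, x, y) \<in># R")
  case True
  then show ?thesis unfolding iedge_def by auto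
next
  case False
  then show ?thesis using assms unfolding iconnected_atoms_def by auto
qed

lemma iedge_rtranclp_plus_iconnected:
  assumes "iconnected_atoms i R S" and "(iedge j (R + S))\<^sup>*\<^sup>* x y"
  shows "(iedge j R)\<^sup>*\<^sup>* x y"
proof -
  have "iedge j (R + S) \<le> (iedge j R)\<^sup>*\<^sup>*"
    using iedge_rtranclp_of_mem[OF assms(1)] iedge_rtranclp_sym
    unfolding iedge_def by blast
  then have "(iedge j (R + S))\<^sup>*\<^sup>* \<le> (iedge j R)\<^sup>*\<^sup>*"
    by (metis rtranclp_mono rtranclp_idemp)
  then show ?thesis
    using assms(2) by (rule predicate2D)
qed

lemma iconnected_atoms_add_euclidean:
  assumes "iconnected_atoms i R S" and "(i, w, u) \<in># R + S" and "(i, w, v) \<in># R + S"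
  shows "iconnected_atoms i R (add_mset (i, u, v) S)"
proof -
  have "(iedge i R)\<^sup>*\<^sup>* u v"
    using iedge_rtranclp_of_mem[OF assms(1,2)] iedge_rtranclp_of_mem[OF assms(1,3)]
    by (meson iedge_rtranclp_sym rtranclp_trans)
  then show ?thesis
    using assms(1) unfolding iconnected_atoms_def by auto
qed

lemma add_mset_eq_plusE:
  assumes "add_mset a M = R + S" and "a \<notin># S"
  obtains R1 where "R = add_mset a R1" and "M = R1 + S"
proof -
  have "a \<in># R"
    using assms by (metis union_iff union_single_eq_member)
  then obtain R1 where "R = add_mset a R1"
    by (metis multi_member_split)
  with assms(1) show ?thesis
    using that by simp
qed

lemma labels_plus_subset: "labels R G \<subseteq> labels (R + S) G"
  unfolding labels_def rlabels_def by auto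

lemma deriv_remove_eucl_iconnected:
  assumes "deriv m n E R' G"
  shows "R' = R + S \<Longrightarrow> iconnected_atoms i R S \<Longrightarrow> deriv m n (E - {i}) R G"
  using assms
proof (induction arbitrary: R S rule: deriv.induct)
  case id
  then show ?case by (simp add: deriv.id)
next
  case conj
  show ?case by (rule deriv.conj[OF conj.IH(1)[OF conj.prems] conj.IH(2)[OF conj.prems]])
next
  case disj
  show ?case by (rule deriv.disj[OF disj.IH[OF disj.prems]])
next
  case (stit j v R' w a G)
  have "deriv m n (E - {i}) (add_mset (j, w, v) R) (add_mset (v, a) G)"
    using stit.prems iconnected_atoms_mono by (intro stit.IH[of _ S]) auto
  moreover have "v \<notin> labels R (add_mset (w, Stit j a) G)"
    using stit.hyps(2) labels_plus_subset stit.prems(1) by blast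
  ultimately show ?case by (rule deriv.stit[OF stit.hyps(1), rotated])
next
  case (box v R' w a G)
  have "v \<notin> labels R (add_mset (w, Box a) G)"
    using box.hyps(1) labels_plus_subset box.prems(1) by blast
  then show ?case by (rule deriv.box[OF _ box.IH[OF box.prems]])
next
  case dia
  show ?case by (rule deriv.dia[OF dia.IH[OF dia.prems]])
next
  case (ioa v R' G u)
  let ?T = "mset (map (\<lambda>j. (j, u j, v)) [1..<Suc m])"
  have "deriv m n (E - {i}) (R + ?T) G"
    using ioa.prems iconnected_atoms_mono by (intro ioa.IH[of _ S]) auto
  moreover have "v \<notin> labels R G"
    using ioa.hyps(1) labels_plus_subset ioa.prems(1) by blast
  ultimately show ?case by (rule deriv.ioa[rotated])
next
  case (pos j w u R0 a G)
  have "(iedge j R)\<^sup>*\<^sup>* w u"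
    using pos.prems by (intro iedge_rtranclp_of_mem[of i R S]) (auto simp flip: pos.prems(1))
  then show ?case by (rule deriv.pr[OF pos.hyps(1) _ pos.IH[OF pos.prems]])
next
  case (refl j w R' G)
  have "deriv m n (E - {i}) (add_mset (j, w, w) R) G"
    using refl.prems iconnected_atoms_mono by (intro refl.IH[of _ S]) auto
  then show ?case by (rule deriv.refl[OF refl.hyps(1)])
next
  case (eucl j w u v R0 G)
  show ?case
  proof (cases "j = i")
    case True
    have "(j, w, u) \<in># R + S" and "(j, w, v) \<in># R + S"
      by (simp_all flip: eucl.prems(1))
    then have "iconnected_atoms i R (add_mset (j, u, v) S)"
      using True eucl.prems(2) iconnected_atoms_add_euclidean by blast
    moreover have "add_mset (j, w, u) (add_mset (j, w, v) (add_mset (j, u, v) R0))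
        = R + add_mset (j, u, v) S"
      using eucl.prems(1) by (simp add: add_mset_commute)
    ultimately show ?thesis using eucl.IH by blast
  next
    case False
    have "(j, w, u) \<notin># S" and "(j, w, v) \<notin># S"
      using eucl.prems(2) False unfolding iconnected_atoms_def by auto
    then obtain R1 where R: "R = add_mset (j, w, u) (add_mset (j, w, v) R1)" and "R0 = R1 + S"
      using eucl.prems(1) by (metis add_mset_eq_plusE)
    then have "deriv m n (E - {i}) (add_mset (j, w, u) (add_mset (j, w, v) (add_mset (j, u, v) R1))) G"
      using eucl.prems(2) iconnected_atoms_mono by (intro eucl.IH[of _ S]) auto
    then show ?thesis
      unfolding R using eucl.hyps(1,2) False by (auto intro: deriv.eucl[of j])
  qed
next
  case (apc j ws R' G)
  have "deriv m n (E - {i}) (add_mset (j, ws k, ws l) R) G"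
    if "k \<le> n - 1 \<and> k + 1 \<le> l \<and> l \<le> n" for k l
  proof -
    have "add_mset (j, ws k, ws l) R' = add_mset (j, ws k, ws l) R + S"
      using apc.prems(1) by simp
    moreover have "iconnected_atoms i (add_mset (j, ws k, ws l) R) S"
      using apc.prems(2) iconnected_atoms_mono by auto
    ultimately show ?thesis
      using apc.IH that by blast
  qed
  then show ?case by (intro deriv.apc[OF apc.hyps(1,2), where ws = ws]) blast
next
  case (pr j R' w u a G)
  have "(iedge j R)\<^sup>*\<^sup>* w u"
    using pr.hyps(2) pr.prems iedge_rtranclp_plus_iconnected by blast
  then show ?case by (rule deriv.pr[OF pr.hyps(1) _ pr.IH[OF pr.prems]])
qed

theorem lemma3:
  fixes m n i :: nat and R :: "ratom multiset" and G :: "lfml multiset"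
  assumes "m \<ge> 1" and "i \<in> {1..m}"
    and "deriv m n {1..m} R G"
  shows "deriv m n ({1..m} - {i}) R G"
  using deriv_remove_eucl_iconnected[OF assms(3), of R "{#}" i]
  unfolding iconnected_atoms_def by simp

end
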